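(* Suppose SMA-DP-SGD (setting below) is run for $T$ private steps $t=0,\dots,T-1$. Let $\varepsilon_{\mathrm{SGM}}(\lambda_{\mathrm R};q,\sigma)$ denote any valid Rényi-DP upper bound at order $\lambda_{\mathrm R}>1$ for the Poisson-subsampled Gaussian mechanism with subsampling probability $q$ and noise-to-sensitivity ratio $\sigma$, and let $\sigma_{\mathrm{eff},t}=\left[\beta\left(\sum_{g=1}^G\sigma_{t,g}^{-2}\right)^{1/2}\right]^{-1}$. Then for every $\lambda_{\mathrm R}>1$ the full release history $(\tilde s_0,\dots,\tilde s_{T-1})$ satisfies $(\lambda_{\mathrm R},\varepsilon_{\mathrm{tot}}(\lambda_{\mathrm R}))$-RDP, where $$\varepsilon_{\mathrm{tot}}(\lambda_{\mathrm R})=\sum_{t=0}^{T-1}\varepsilon_{\mathrm{SGM}}\left(\lambda_{\mathrm R};q_t,\sigma_{\mathrm{eff},t}\right).$$ Consequently, for any $\delta\in(0,1)$, SMA-DP-SGD satisfies $(\varepsilon_\delta,\delta)$-DP with $$\varepsilon_\delta=\inf_{\lambda_{\mathrm R}>1}\left\{\varepsilon_{\mathrm{tot}}(\lambda_{\mathrm R})+\frac{\log(1/\delta)}{\lambda_{\mathrm R}-1}\right\}.$$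
   Context: SMA-DP-SGD setting: dataset $D=\{x_1,\dots,x_N\}$; adjacency is add/remove of one example. Parameters are partitioned into groups $g=1,\dots,G$ (dimension $d_g$, identity $I_g$), with clipping norms $C^{(g)}>0$, noise multipliers $\sigma_{t,g}>0$, and fixed mixing coefficient $\beta\in(0,1]$. At each step $t$, a fresh Poisson mask $m_t$ with $m_{t,i}\sim\mathrm{Bernoulli}(q_t)$ independently is drawn and shared by all groups; $s_t^{(g)}(D;m_t)=\sum_i m_{t,i}\bar g_t^{(g)}(x_i)$ where $\bar g_t^{(g)}(x_i)=g_t^{(g)}(x_i)/\max(1,\|g_t^{(g)}(x_i)\|_2/C^{(g)})$ is the clipped per-example gradient of group $g$ at the current model $\theta_t$. The group query is $r_t^{(g)}=\beta s_t^{(g)}(D;m_t)+b_t^{(g)}(\mathcal H_t)$, where the memory branch $b_t^{(g)}$ is a deterministic function of the global prior private release history $\mathcal H_t=(\tilde s_0,\dots,\tilde s_{t-1})$, the model state induced by it, and public hyperparameters, independent of the current data. The release is $\tilde s_t=(\tilde s_t^{(1)},\dots,\tilde s_t^{(G)})=r_t+Z_t$ with fresh $Z_t\sim\mathcal N(0,\operatorname{diag}(\sigma_{t,1}^2(C^{(1)})^2I_1,\ldots,\sigma_{t,G}^2(C^{(G)})^2I_G))$; the model is then updated from $\tilde s_t$ and $\tilde s_t$ is appended to the history. *)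

theory Defs
  imports "HOL-Probability.Probability"
begin

definition remove_nth :: "nat \<Rightarrow> 'x list \<Rightarrow> 'x list" where
  "remove_nth i xs = take i xs @ drop (Suc i) xs"

definition adjacent :: "'x list \<Rightarrow> 'x list \<Rightarrow> bool" where
  "adjacent D D' \<longleftrightarrow>
     (\<exists>i<length D. D' = remove_nth i D) \<or> (\<exists>i<length D'. D = remove_nth i D')"

definition renyi_div :: "real \<Rightarrow> 'a measure \<Rightarrow> 'a measure \<Rightarrow> ereal" where
  "renyi_div a P Q =
    (let I = (\<integral>\<^sup>+ x. ennreal (enn2real (RN_deriv Q P x) powr a) \<partial>Q) in
     if sets P = sets Q \<and> absolutely_continuous Q P \<and> I < \<infinity>
     then ereal (ln (enn2real I) / (a - 1)) else \<infinity>)"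

definition rdp :: "real \<Rightarrow> real \<Rightarrow> ('x list \<Rightarrow> 'a measure) \<Rightarrow> bool" where
  "rdp a eps M \<longleftrightarrow> (\<forall>D D'. adjacent D D' \<longrightarrow> renyi_div a (M D) (M D') \<le> ereal eps)"

definition dp :: "real \<Rightarrow> real \<Rightarrow> ('x list \<Rightarrow> 'a measure) \<Rightarrow> bool" where
  "dp eps delta M \<longleftrightarrow> (\<forall>D D'. adjacent D D' \<longrightarrow>
      (\<forall>A \<in> sets (M D). measure (M D) A \<le> exp eps * measure (M D') A + delta))"

text \<open>Parameter vectors are functions on a finite coordinate type 'd; coordinates are
  partitioned into groups via grp :: 'd => 'g.\<close>

definition vspace :: "('d::finite \<Rightarrow> real) measure" where
  "vspace = PiM UNIV (\<lambda>_. borel)"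

definition l2 :: "('d::finite \<Rightarrow> real) \<Rightarrow> real" where
  "l2 v = sqrt (\<Sum>j\<in>UNIV. (v j)\<^sup>2)"

definition gnorm :: "('d \<Rightarrow> 'g) \<Rightarrow> 'g \<Rightarrow> ('d::finite \<Rightarrow> real) \<Rightarrow> real" where
  "gnorm grp g v = sqrt (\<Sum>j\<in>{j. grp j = g}. (v j)\<^sup>2)"

definition clip :: "('d \<Rightarrow> 'g) \<Rightarrow> ('g \<Rightarrow> real) \<Rightarrow> ('d::finite \<Rightarrow> real) \<Rightarrow> ('d \<Rightarrow> real)" where
  "clip grp C v = (\<lambda>j. v j / max 1 (gnorm grp (grp j) v / C (grp j)))"

definition poisson_mask :: "real \<Rightarrow> nat \<Rightarrow> (nat \<Rightarrow> bool) measure" where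
  "poisson_mask q n = measure_pmf (Pi_pmf {..<n} False (\<lambda>_. bernoulli_pmf q))"

definition gauss_noise :: "('d::finite \<Rightarrow> real) \<Rightarrow> ('d \<Rightarrow> real) measure" where
  "gauss_noise s = PiM UNIV (\<lambda>j. density lborel (normal_density 0 (s j)))"

text \<open>Dataset entries are the (sensitivity <= 1) per-example contributions in R^d.\<close>
definition sgm :: "real \<Rightarrow> real \<Rightarrow> ('d::finite \<Rightarrow> real) list \<Rightarrow> ('d \<Rightarrow> real) measure" where
  "sgm q \<sigma> xs = distr (poisson_mask q (length xs) \<Otimes>\<^sub>M gauss_noise (\<lambda>_. \<sigma>)) vspace
     (\<lambda>(m, z) j. (\<Sum>i<length xs. if m i then (xs ! i) j else 0) + z j)"

definition valid_sgm_bound :: "'d::finite itself \<Rightarrow> (real \<Rightarrow> real \<Rightarrow> real \<Rightarrow> real) \<Rightarrow> bool" where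
  "valid_sgm_bound _ eps \<longleftrightarrow>
    (\<forall>a>1. \<forall>q\<in>{0..1}. \<forall>\<sigma>>0. \<forall>xs xs' :: ('d \<Rightarrow> real) list.
       adjacent xs xs' \<and> (\<forall>v \<in> set xs \<union> set xs'. l2 v \<le> 1) \<longrightarrow>
       renyi_div a (sgm q \<sigma> xs) (sgm q \<sigma> xs') \<le> ereal (eps a q \<sigma>))"

definition hspace :: "nat \<Rightarrow> (nat \<Rightarrow> 'd::finite \<Rightarrow> real) measure" where
  "hspace t = PiM {..<t} (\<lambda>_. vspace)"

text \<open>One step: shared Poisson mask, per-group clipping, mixing beta, memory branch b,
  independent Gaussian noise with std sigma_(t,g) C^(g) on the coordinates of group g.
  grad t h x is the per-example gradient at the model induced by history h.\<close>
definition sma_step ::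
  "('d \<Rightarrow> 'g) \<Rightarrow> ('g \<Rightarrow> real) \<Rightarrow> (nat \<Rightarrow> 'g \<Rightarrow> real) \<Rightarrow> real \<Rightarrow> (nat \<Rightarrow> real)
   \<Rightarrow> (nat \<Rightarrow> (nat \<Rightarrow> 'd \<Rightarrow> real) \<Rightarrow> 'x \<Rightarrow> ('d \<Rightarrow> real))
   \<Rightarrow> (nat \<Rightarrow> (nat \<Rightarrow> 'd \<Rightarrow> real) \<Rightarrow> ('d \<Rightarrow> real))
   \<Rightarrow> nat \<Rightarrow> 'x list \<Rightarrow> (nat \<Rightarrow> 'd::finite \<Rightarrow> real) \<Rightarrow> ('d \<Rightarrow> real) measure" where
  "sma_step grp C sig \<beta> q grad b t D h =
     distr (poisson_mask (q t) (length D) \<Otimes>\<^sub>M gauss_noise (\<lambda>j. sig t (grp j) * C (grp j))) vspace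
       (\<lambda>(m, z) j. \<beta> * (\<Sum>i<length D. if m i then clip grp C (grad t h (D ! i)) j else 0)
                   + b t h j + z j)"

fun sma_hist ::
  "('d \<Rightarrow> 'g) \<Rightarrow> ('g \<Rightarrow> real) \<Rightarrow> (nat \<Rightarrow> 'g \<Rightarrow> real) \<Rightarrow> real \<Rightarrow> (nat \<Rightarrow> real)
   \<Rightarrow> (nat \<Rightarrow> (nat \<Rightarrow> 'd \<Rightarrow> real) \<Rightarrow> 'x \<Rightarrow> ('d \<Rightarrow> real))
   \<Rightarrow> (nat \<Rightarrow> (nat \<Rightarrow> 'd \<Rightarrow> real) \<Rightarrow> ('d \<Rightarrow> real))
   \<Rightarrow> nat \<Rightarrow> 'x list \<Rightarrow> (nat \<Rightarrow> 'd::finite \<Rightarrow> real) measure" where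
  "sma_hist grp C sig \<beta> q grad b 0 D = return (hspace 0) (\<lambda>_. undefined)"
| "sma_hist grp C sig \<beta> q grad b (Suc t) D =
     sma_hist grp C sig \<beta> q grad b t D \<bind>
       (\<lambda>h. distr (sma_step grp C sig \<beta> q grad b t D h) (hspace (Suc t)) (\<lambda>s. h(t := s)))"

definition sigma_eff :: "real \<Rightarrow> ('g::finite \<Rightarrow> real) \<Rightarrow> real" where
  "sigma_eff \<beta> sg = 1 / (\<beta> * sqrt (\<Sum>g\<in>UNIV. 1 / (sg g)\<^sup>2))"

end

theory Submission
  imports Defs
begin

(* Subtracting b_t(h) and dividing the coordinates of group g by
   sigma_(t,g) C^(g) / sigma_eff is a data-independent affine bijection: it turns the step into
   the subsampled Gaussian mechanism with isotropic noise sigma_eff applied to contributions of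
   norm at most 1 (this is what the choice of sigma_eff guarantees), and it leaves the Renyi
   moment  int q (p/q)^a  unchanged.  So every conditional step has Renyi moment at most
   exp((a-1) eps_SGM(a; q_t, sigma_eff,t)).  The history has density
   prod_t p_t(s_t | s_0..s_(t-1)); integrating out one release at a time multiplies these
   bounds, which is RDP with the summed epsilon.  DP follows by integrating the pointwise bound
   r <= K + K^(1-a) r^a, K = exp(eps + log(1/delta)/(a-1)), against the likelihood ratio r
   and taking the infimum over a. *)

definition lborel_vec :: "('d::finite \<Rightarrow> real) measure" where
  "lborel_vec = PiM UNIV (\<lambda>_. lborel)"

lemma sets_lborel_vec[measurable_cong]: "sets (lborel_vec :: ('d::finite \<Rightarrow> real) measure) = sets vspace"
  unfolding lborel_vec_def vspace_def by (rule sets_PiM_cong) auto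

lemma space_lborel_vec[simp]: "space (lborel_vec :: ('d::finite \<Rightarrow> real) measure) = UNIV"
  unfolding lborel_vec_def by (simp add: space_PiM)

lemma sets_gauss_noise[measurable_cong]: "sets (gauss_noise s) = sets vspace"
  unfolding gauss_noise_def vspace_def by (rule sets_PiM_cong) auto

lemma space_gauss_noise[simp]: "space (gauss_noise s) = UNIV"
  unfolding gauss_noise_def by (simp add: space_PiM)

lemma measurable_gauss_noise_component: "(\<lambda>z. z j) \<in> borel_measurable (gauss_noise s)"
  unfolding gauss_noise_def by measurable

(* Not declared [measurable]: the measurability prover would then try to factor every
   term  f x j  through vspace and get stuck. *)
lemma measurable_vspace_component:
  "(\<lambda>x. x j) \<in> borel_measurable (vspace :: ('d::finite \<Rightarrow> real) measure)"
  unfolding vspace_def by measurable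

lemma measurable_into_vspace:
  "(\<And>j. (\<lambda>x. f x j) \<in> borel_measurable M) \<Longrightarrow> f \<in> M \<rightarrow>\<^sub>M (vspace :: ('d::finite \<Rightarrow> real) measure)"
  unfolding vspace_def by (rule measurable_PiM_single') (auto simp: space_PiM)

lemma measurable_clip[measurable (raw)]:
  fixes grp :: "'d::finite \<Rightarrow> 'g"
  assumes [measurable]: "\<And>j. (\<lambda>x. f x j) \<in> borel_measurable M"
  shows "(\<lambda>x. clip grp C (f x) j) \<in> borel_measurable M"
  unfolding clip_def gnorm_def by measurable

interpretation lborel_factors: product_sigma_finite "\<lambda>_::'d. lborel :: real measure"
  by (auto simp: product_sigma_finite_def intro: lborel.sigma_finite_measure_axioms)

lemma sigma_finite_lborel_vec: "sigma_finite_measure (lborel_vec :: ('d::finite \<Rightarrow> real) measure)"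
  unfolding lborel_vec_def by (rule lborel_factors.sigma_finite) simp

lemma density_prod_eq_PiM:
  fixes f :: "'d::finite \<Rightarrow> real \<Rightarrow> real"
  assumes f[measurable]: "\<And>j. f j \<in> borel_measurable borel" and f_nonneg: "\<And>j x. 0 \<le> f j x"
    and prob: "\<And>j. prob_space (density lborel (f j))"
  shows "density lborel_vec (\<lambda>x. ennreal (\<Prod>j\<in>UNIV. f j (x j))) = PiM UNIV (\<lambda>j. density lborel (f j))"
proof -
  have [measurable]: "(\<lambda>x. ennreal (\<Prod>j\<in>UNIV. f j (x j))) \<in> borel_measurable lborel_vec"
    unfolding lborel_vec_def by measurable
  interpret S: product_sigma_finite "\<lambda>j. density lborel (f j)"
    by (auto simp: product_sigma_finite_def intro!: prob_space_imp_sigma_finite prob)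
  show ?thesis
  proof (rule S.PiM_eqI)
    show "sets (density lborel_vec (\<lambda>x. ennreal (\<Prod>j\<in>UNIV. f j (x j)))) = sets (PiM UNIV (\<lambda>j. density lborel (f j)))"
      unfolding lborel_vec_def sets_density by (rule sets_PiM_cong) auto
    fix A assume "\<And>i. i \<in> (UNIV::'d set) \<Longrightarrow> A i \<in> sets (density lborel (f i))"
    then have A: "\<And>i. A i \<in> sets borel" by simp
    have "Pi\<^sub>E UNIV A \<in> sets lborel_vec"
      unfolding lborel_vec_def using A by (intro sets_PiM_I_finite) auto
    then have "emeasure (density lborel_vec (\<lambda>x. ennreal (\<Prod>j\<in>UNIV. f j (x j)))) (Pi\<^sub>E UNIV A)
        = (\<integral>\<^sup>+x. ennreal (\<Prod>j\<in>UNIV. f j (x j)) * indicator (Pi\<^sub>E UNIV A) x \<partial>lborel_vec)"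
      by (intro emeasure_density) auto
    also have "\<dots> = (\<integral>\<^sup>+x. (\<Prod>j\<in>UNIV. ennreal (f j (x j)) * indicator (A j) (x j)) \<partial>lborel_vec)"
      using f_nonneg by (intro nn_integral_cong)
        (auto simp: prod.distrib indicator_def PiE_def Pi_def prod_ennreal)
    also have "\<dots> = (\<Prod>j\<in>UNIV. (\<integral>\<^sup>+y. ennreal (f j y) * indicator (A j) y \<partial>lborel))"
      unfolding lborel_vec_def using A by (intro lborel_factors.product_nn_integral_prod) auto
    also have "\<dots> = (\<Prod>j\<in>UNIV. emeasure (density lborel (f j)) (A j))"
      using A by (intro prod.cong refl) (simp add: emeasure_density)
    finally show "emeasure (density lborel_vec (\<lambda>x. ennreal (\<Prod>j\<in>UNIV. f j (x j)))) (Pi\<^sub>E UNIV A)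
        = (\<Prod>j\<in>UNIV. emeasure (density lborel (f j)) (A j))" .
  qed simp
qed

lemma emeasure_normal_density_translate:
  assumes [measurable]: "A \<in> sets borel"
  shows "emeasure (density lborel (normal_density 0 s)) {z. c + z \<in> A}
       = emeasure (density lborel (normal_density c s)) A"
proof -
  have "emeasure (density lborel (normal_density c s)) A
      = (\<integral>\<^sup>+x. ennreal (normal_density c s x) * indicator A x \<partial>lborel)"
    by (intro emeasure_density) auto
  also have "\<dots> = (\<integral>\<^sup>+x. ennreal (normal_density c s (c + x)) * indicator A (c + x) \<partial>lborel)"
    using nn_integral_real_affine[where c=1 and t=c
        and f="\<lambda>x. ennreal (normal_density c s x) * indicator A x"] by simp
  also have "\<dots> = (\<integral>\<^sup>+x. ennreal (normal_density 0 s x) * indicator {z. c + z \<in> A} x \<partial>lborel)"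
    by (simp add: normal_density_def indicator_def)
  also have "\<dots> = emeasure (density lborel (normal_density 0 s)) {z. c + z \<in> A}"
    by (intro emeasure_density[symmetric]) auto
  finally show ?thesis ..
qed

definition gauss_density :: "('d::finite \<Rightarrow> real) \<Rightarrow> ('d \<Rightarrow> real) \<Rightarrow> ('d \<Rightarrow> real) \<Rightarrow> real" where
  "gauss_density s c x = (\<Prod>j\<in>UNIV. normal_density (c j) (s j) (x j))"

lemma gauss_density_nonneg: "0 \<le> gauss_density s c x"
  unfolding gauss_density_def by (intro prod_nonneg) auto

lemma gauss_density_pos: "(\<And>j. 0 < s j) \<Longrightarrow> 0 < gauss_density s c x"
  unfolding gauss_density_def by (intro prod_pos normal_density_pos) auto

lemma measurable_gauss_density[measurable]:
  "(\<lambda>x. gauss_density s c x) \<in> borel_measurable (vspace :: ('d::finite \<Rightarrow> real) measure)"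
  unfolding gauss_density_def vspace_def by measurable

lemma prob_space_gauss_noise: "(\<And>j. 0 < s j) \<Longrightarrow> prob_space (gauss_noise s)"
  unfolding gauss_noise_def by (intro prob_space_PiM prob_space_normal_density)

lemma distr_gauss_noise_translate:
  fixes s c :: "'d::finite \<Rightarrow> real"
  assumes s: "\<And>j. 0 < s j"
  shows "distr (gauss_noise s) vspace (\<lambda>z j. c j + z j) = density lborel_vec (\<lambda>x. ennreal (gauss_density s c x))"
proof -
  interpret S: product_sigma_finite "\<lambda>j. density lborel (normal_density (c j) (s j))"
    using s by (auto simp: product_sigma_finite_def
        intro!: prob_space_imp_sigma_finite prob_space_normal_density)
  interpret S0: product_sigma_finite "\<lambda>j. density lborel (normal_density 0 (s j))"
    using s by (auto simp: product_sigma_finite_def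
        intro!: prob_space_imp_sigma_finite prob_space_normal_density)
  have "distr (gauss_noise s) vspace (\<lambda>z j. c j + z j) = PiM UNIV (\<lambda>j. density lborel (normal_density (c j) (s j)))"
  proof (rule S.PiM_eqI)
    fix A assume "\<And>i. i \<in> (UNIV::'d set) \<Longrightarrow> A i \<in> sets (density lborel (normal_density (c i) (s i)))"
    then have A: "\<And>i. A i \<in> sets borel" by simp
    have "Pi\<^sub>E UNIV A \<in> sets vspace"
      unfolding vspace_def using A by (intro sets_PiM_I_finite) auto
    moreover have "(\<lambda>z j. c j + z j) \<in> gauss_noise s \<rightarrow>\<^sub>M vspace"
      using measurable_vspace_component by (intro measurable_into_vspace) measurable
    moreover have "(\<lambda>z j. c j + z j) -` Pi\<^sub>E UNIV A = Pi\<^sub>E UNIV (\<lambda>j. {z. c j + z \<in> A j})"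
      by (auto simp: PiE_UNIV_domain Pi_iff)
    ultimately have "emeasure (distr (gauss_noise s) vspace (\<lambda>z j. c j + z j)) (Pi\<^sub>E UNIV A)
        = emeasure (gauss_noise s) (Pi\<^sub>E UNIV (\<lambda>j. {z. c j + z \<in> A j}))"
      by (simp add: emeasure_distr)
    also have "\<dots> = (\<Prod>j\<in>UNIV. emeasure (density lborel (normal_density 0 (s j))) {z. c j + z \<in> A j})"
      unfolding gauss_noise_def using A by (intro S0.emeasure_PiM) auto
    also have "\<dots> = (\<Prod>j\<in>UNIV. emeasure (density lborel (normal_density (c j) (s j))) (A j))"
      using A by (intro prod.cong refl emeasure_normal_density_translate)
    finally show "emeasure (distr (gauss_noise s) vspace (\<lambda>z j. c j + z j)) (Pi\<^sub>E UNIV A)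
        = (\<Prod>j\<in>UNIV. emeasure (density lborel (normal_density (c j) (s j))) (A j))" .
  qed (auto simp: vspace_def intro!: sets_PiM_cong)
  also have "\<dots> = density lborel_vec (\<lambda>x. ennreal (gauss_density s c x))"
    unfolding gauss_density_def using s
    by (intro density_prod_eq_PiM[symmetric]) (auto intro: prob_space_normal_density)
  finally show ?thesis .
qed

definition mask_pmf :: "real \<Rightarrow> nat \<Rightarrow> (nat \<Rightarrow> bool) pmf" where
  "mask_pmf q n = Pi_pmf {..<n} False (\<lambda>_. bernoulli_pmf q)"

lemma poisson_mask_eq_mask_pmf: "poisson_mask q n = measure_pmf (mask_pmf q n)"
  unfolding poisson_mask_def mask_pmf_def ..

lemma finite_set_mask_pmf: "finite (set_pmf (mask_pmf q n))"
proof (rule finite_subset)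
  show "set_pmf (mask_pmf q n) \<subseteq> PiE_dflt {..<n} False (set_pmf \<circ> (\<lambda>_. bernoulli_pmf q))"
    unfolding mask_pmf_def by (rule set_Pi_pmf_subset') simp
qed (intro finite_PiE_dflt, auto)

lemma measurable_poisson_mask_borel[measurable]: "f \<in> borel_measurable (poisson_mask q n)"
  by (simp add: poisson_mask_def)

lemma measurable_poisson_mask_count_space[measurable]: "f \<in> poisson_mask q n \<rightarrow>\<^sub>M count_space UNIV"
  by (simp add: poisson_mask_def)

lemma prob_space_poisson_mask: "prob_space (poisson_mask q n)"
  unfolding poisson_mask_def by (rule prob_space_measure_pmf)

text \<open>The density of \<open>\<mu> m + Z\<close> for a Poisson mask \<open>m\<close> and independent Gaussian noise \<open>Z\<close>.\<close>
definition mixture_density ::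
  "real \<Rightarrow> nat \<Rightarrow> ('d::finite \<Rightarrow> real) \<Rightarrow> ((nat \<Rightarrow> bool) \<Rightarrow> 'd \<Rightarrow> real) \<Rightarrow> ('d \<Rightarrow> real) \<Rightarrow> real" where
  "mixture_density q n s \<mu> x =
     (\<Sum>m\<in>set_pmf (mask_pmf q n). pmf (mask_pmf q n) m * gauss_density s (\<mu> m) x)"

lemma mixture_density_nonneg: "0 \<le> mixture_density q n s \<mu> x"
  unfolding mixture_density_def by (intro sum_nonneg mult_nonneg_nonneg gauss_density_nonneg) auto

lemma mixture_density_pos:
  assumes "\<And>j. 0 < s j"
  shows "0 < mixture_density q n s \<mu> x"
proof -
  obtain m0 where m0: "m0 \<in> set_pmf (mask_pmf q n)"
    using set_pmf_not_empty[of "mask_pmf q n"] by blast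
  have "0 < pmf (mask_pmf q n) m0 * gauss_density s (\<mu> m0) x"
    using m0 assms by (intro mult_pos_pos gauss_density_pos) (auto simp: pmf_positive)
  also have "\<dots> \<le> mixture_density q n s \<mu> x"
    unfolding mixture_density_def using m0 finite_set_mask_pmf
    by (intro member_le_sum mult_nonneg_nonneg gauss_density_nonneg) auto
  finally show ?thesis .
qed

lemma measurable_mixture_density[measurable]:
  "(\<lambda>x. mixture_density q n s \<mu> x) \<in> borel_measurable (vspace :: ('d::finite \<Rightarrow> real) measure)"
  unfolding mixture_density_def by measurable

lemma measurable_mask_noise_map:
  "(\<lambda>(m, z) j. \<mu> m j + z j) \<in> poisson_mask q n \<Otimes>\<^sub>M gauss_noise s \<rightarrow>\<^sub>M (vspace :: ('d::finite \<Rightarrow> real) measure)"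
proof (rule measurable_into_vspace)
  fix j
  note measurable_gauss_noise_component[measurable]
  show "(\<lambda>x. (case x of (m, z) \<Rightarrow> \<lambda>j. \<mu> m j + z j) j) \<in> borel_measurable (poisson_mask q n \<Otimes>\<^sub>M gauss_noise s)"
    by (simp add: case_prod_beta) measurable
qed

lemma distr_mask_noise_eq_density:
  fixes s :: "'d::finite \<Rightarrow> real"
  assumes s: "\<And>j. 0 < s j"
  shows "distr (poisson_mask q n \<Otimes>\<^sub>M gauss_noise s) vspace (\<lambda>(m, z) j. \<mu> m j + z j)
       = density lborel_vec (\<lambda>x. ennreal (mixture_density q n s \<mu> x))"
proof (rule measure_eqI)
  let ?F = "\<lambda>(m, z) j. \<mu> m j + z j :: real"
  let ?p = "pmf (mask_pmf q n)"
  fix A assume "A \<in> sets (distr (poisson_mask q n \<Otimes>\<^sub>M gauss_noise s) vspace ?F)"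
  then have A[measurable]: "A \<in> sets vspace" by simp
  interpret N: prob_space "gauss_noise s" using s by (rule prob_space_gauss_noise)
  have F[measurable]: "?F \<in> poisson_mask q n \<Otimes>\<^sub>M gauss_noise s \<rightarrow>\<^sub>M vspace"
    by (rule measurable_mask_noise_map)
  have "emeasure (distr (poisson_mask q n \<Otimes>\<^sub>M gauss_noise s) vspace ?F) A
      = (\<integral>\<^sup>+m. emeasure (gauss_noise s) (Pair m -` (?F -` A \<inter> space (poisson_mask q n \<Otimes>\<^sub>M gauss_noise s))) \<partial>poisson_mask q n)"
    by (simp add: emeasure_distr N.emeasure_pair_measure_alt)
  also have "\<dots> = (\<integral>\<^sup>+m. (\<integral>\<^sup>+x. ennreal (gauss_density s (\<mu> m) x) * indicator A x \<partial>lborel_vec) \<partial>poisson_mask q n)"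
  proof (rule nn_integral_cong)
    fix m
    have shift: "(\<lambda>z j. \<mu> m j + z j) \<in> gauss_noise s \<rightarrow>\<^sub>M vspace"
      using measurable_vspace_component by (intro measurable_into_vspace) measurable
    have "Pair m -` (?F -` A \<inter> space (poisson_mask q n \<Otimes>\<^sub>M gauss_noise s))
        = (\<lambda>z j. \<mu> m j + z j) -` A \<inter> space (gauss_noise s)"
      by (auto simp: space_pair_measure poisson_mask_def)
    also have "emeasure (gauss_noise s) \<dots> = emeasure (distr (gauss_noise s) vspace (\<lambda>z j. \<mu> m j + z j)) A"
      using shift by (simp add: emeasure_distr)
    also have "\<dots> = (\<integral>\<^sup>+x. ennreal (gauss_density s (\<mu> m) x) * indicator A x \<partial>lborel_vec)"
      unfolding distr_gauss_noise_translate[OF s] by (intro emeasure_density) auto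
    finally show "emeasure (gauss_noise s) (Pair m -` (?F -` A \<inter> space (poisson_mask q n \<Otimes>\<^sub>M gauss_noise s)))
        = (\<integral>\<^sup>+x. ennreal (gauss_density s (\<mu> m) x) * indicator A x \<partial>lborel_vec)" .
  qed
  also have "\<dots> = (\<Sum>m\<in>set_pmf (mask_pmf q n). ?p m * (\<integral>\<^sup>+x. ennreal (gauss_density s (\<mu> m) x) * indicator A x \<partial>lborel_vec))"
    unfolding poisson_mask_eq_mask_pmf
    by (subst nn_integral_measure_pmf_finite[OF finite_set_mask_pmf]) (auto simp: mult.commute)
  also have "\<dots> = (\<Sum>m\<in>set_pmf (mask_pmf q n). (\<integral>\<^sup>+x. ennreal (?p m * gauss_density s (\<mu> m) x) * indicator A x \<partial>lborel_vec))"
    by (intro sum.cong refl, subst nn_integral_cmult[symmetric])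
       (auto intro!: nn_integral_cong simp: ennreal_mult' gauss_density_nonneg mult_ac)
  also have "\<dots> = (\<integral>\<^sup>+x. ennreal (mixture_density q n s \<mu> x) * indicator A x \<partial>lborel_vec)"
    unfolding mixture_density_def
    by (subst nn_integral_sum[symmetric])
       (auto intro!: nn_integral_cong simp: sum_distrib_right[symmetric] sum_ennreal gauss_density_nonneg)
  also have "\<dots> = emeasure (density lborel_vec (\<lambda>x. ennreal (mixture_density q n s \<mu> x))) A"
    by (intro emeasure_density[symmetric]) auto
  finally show "emeasure (distr (poisson_mask q n \<Otimes>\<^sub>M gauss_noise s) vspace ?F) A
      = emeasure (density lborel_vec (\<lambda>x. ennreal (mixture_density q n s \<mu> x))) A" .
qed (simp add: sets_lborel_vec)

lemma prob_space_mixture_density: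
  fixes s :: "'d::finite \<Rightarrow> real"
  assumes s: "\<And>j. 0 < s j"
  shows "prob_space (density lborel_vec (\<lambda>x. ennreal (mixture_density q n s \<mu> x)))"
proof -
  interpret N: prob_space "gauss_noise s" using s by (rule prob_space_gauss_noise)
  interpret M: prob_space "poisson_mask q n" by (rule prob_space_poisson_mask)
  interpret MN: pair_prob_space "poisson_mask q n" "gauss_noise s" ..
  show ?thesis
    unfolding distr_mask_noise_eq_density[OF s, symmetric]
    by (intro MN.prob_space_distr measurable_mask_noise_map)
qed

lemma sgm_eq_density:
  assumes "0 < \<sigma>"
  shows "sgm q \<sigma> (xs :: ('d::finite \<Rightarrow> real) list) = density lborel_vec
     (\<lambda>x. ennreal (mixture_density q (length xs) (\<lambda>_. \<sigma>) (\<lambda>m j. \<Sum>i<length xs. if m i then (xs ! i) j else 0) x))"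
  unfolding sgm_def using assms by (intro distr_mask_noise_eq_density)

section \<open>Renyi moments of densities and conversion to DP\<close>

abbreviation renyi_moment :: "real \<Rightarrow> 'a measure \<Rightarrow> 'a measure \<Rightarrow> ennreal" where
  "renyi_moment a P Q \<equiv> (\<integral>\<^sup>+ x. ennreal (enn2real (RN_deriv Q P x) powr a) \<partial>Q)"

definition renyi_integrand :: "real \<Rightarrow> real \<Rightarrow> real \<Rightarrow> real" where
  "renyi_integrand a u v = v * (u / v) powr a"

lemma renyi_integrand_nonneg: "0 \<le> v \<Longrightarrow> 0 \<le> renyi_integrand a u v"
  unfolding renyi_integrand_def by simp

lemma renyi_integrand_pos: "0 < u \<Longrightarrow> 0 < v \<Longrightarrow> 0 < renyi_integrand a u v"
  unfolding renyi_integrand_def by simp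

lemma renyi_integrand_mult:
  assumes "0 \<le> u" "0 \<le> u'" "0 < v" "0 < v'"
  shows "renyi_integrand a (u * u') (v * v') = renyi_integrand a u v * renyi_integrand a u' v'"
  unfolding renyi_integrand_def using assms by (simp add: powr_mult[symmetric] mult_ac)

lemma renyi_integrand_divide:
  assumes "0 < K"
  shows "renyi_integrand a (u / K) (v / K) = renyi_integrand a u v / K"
  unfolding renyi_integrand_def using assms by simp

lemma borel_measurable_renyi_integrand[measurable (raw)]:
  assumes [measurable]: "f \<in> borel_measurable M" "g \<in> borel_measurable M"
  shows "(\<lambda>x. renyi_integrand a (f x) (g x)) \<in> borel_measurable M"
  unfolding renyi_integrand_def by measurable

lemma renyi_div_leD:
  assumes R: "renyi_div a P Q \<le> ereal e" and a: "1 < a"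
  shows "sets P = sets Q" "absolutely_continuous Q P"
    and "renyi_moment a P Q \<le> ennreal (exp ((a - 1) * e))"
proof -
  let ?I = "renyi_moment a P Q"
  have c: "sets P = sets Q \<and> absolutely_continuous Q P \<and> ?I < \<infinity>"
    using R by (rule contrapos_pp) (auto simp: renyi_div_def Let_def)
  then show "sets P = sets Q" "absolutely_continuous Q P" by auto
  have "ln (enn2real ?I) / (a - 1) \<le> e"
    using c R unfolding renyi_div_def Let_def by auto
  then have le: "ln (enn2real ?I) \<le> (a - 1) * e"
    using a by (simp add: divide_le_eq mult.commute)
  show "?I \<le> ennreal (exp ((a - 1) * e))"
  proof (cases "enn2real ?I = 0")
    case True
    then show ?thesis using c by (auto simp: enn2real_eq_0_iff)
  next
    case False
    then have "0 < enn2real ?I"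
      using enn2real_nonneg[of ?I] by linarith
    moreover have "exp (ln (enn2real ?I)) \<le> exp ((a - 1) * e)"
      using le by simp
    ultimately have "ennreal (enn2real ?I) \<le> ennreal (exp ((a - 1) * e))"
      by (intro ennreal_leI) simp
    then show ?thesis using c by (simp add: less_top)
  qed
qed

lemma renyi_div_leI:
  assumes "sets P = sets Q" "absolutely_continuous Q P"
    and I: "renyi_moment a P Q \<le> ennreal (exp ((a - 1) * e))" and I0: "renyi_moment a P Q \<noteq> 0"
    and a: "1 < a"
  shows "renyi_div a P Q \<le> ereal e"
proof -
  let ?I = "renyi_moment a P Q"
  have fin: "?I < \<infinity>" using I by (simp add: le_less_trans)
  have pos: "0 < enn2real ?I"
    using fin I0 by (simp add: enn2real_positive_iff less_top[symmetric] zero_less_iff_neq_zero)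
  have "enn2real ?I \<le> exp ((a - 1) * e)"
    using I by (simp add: enn2real_leI)
  then have "ln (enn2real ?I) \<le> ln (exp ((a - 1) * e))"
    using pos by (subst ln_le_cancel_iff) auto
  then have "ln (enn2real ?I) / (a - 1) \<le> e"
    using a by (simp add: divide_le_eq mult.commute)
  then show ?thesis
    using assms(1,2) fin unfolding renyi_div_def Let_def by auto
qed

lemma renyi_moment_density:
  fixes f g :: "'a \<Rightarrow> real"
  assumes [measurable]: "f \<in> borel_measurable L" "g \<in> borel_measurable L"
    and f_nonneg: "\<And>x. 0 \<le> f x" and g_pos: "\<And>x. 0 < g x"
    and Q: "prob_space (density L g)"
  shows "absolutely_continuous (density L g) (density L f)"
    and "renyi_moment a (density L f) (density L g) = (\<integral>\<^sup>+ x. ennreal (renyi_integrand a (f x) (g x)) \<partial>L)"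
proof -
  let ?Q = "density L g"
  interpret Q: prob_space ?Q by (rule Q)
  have ratio[measurable]: "(\<lambda>x. ennreal (f x / g x)) \<in> borel_measurable ?Q" by simp
  have "density ?Q (\<lambda>x. ennreal (f x / g x)) = density L (\<lambda>x. ennreal (g x) * ennreal (f x / g x))"
    by (intro density_density_eq) auto
  also have "\<dots> = density L f"
  proof (rule density_cong)
    have "ennreal (g x) * ennreal (f x / g x) = ennreal (f x)" for x
      using g_pos[of x] f_nonneg[of x] by (simp add: ennreal_mult'[symmetric])
    then show "AE x in L. ennreal (g x) * ennreal (f x / g x) = ennreal (f x)" by simp
  qed simp_all
  finally have eq: "density ?Q (\<lambda>x. ennreal (f x / g x)) = density L f" .
  show "absolutely_continuous ?Q (density L f)"
    using absolutely_continuousI_density[OF ratio] by (simp add: eq)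
  have "AE x in ?Q. ennreal (f x / g x) = RN_deriv ?Q (density L f) x"
    using ratio eq by (rule Q.RN_deriv_unique)
  then have "AE x in ?Q. enn2real (RN_deriv ?Q (density L f) x) = f x / g x"
    by eventually_elim (metis enn2real_ennreal divide_nonneg_pos f_nonneg g_pos)
  then have "renyi_moment a (density L f) ?Q = (\<integral>\<^sup>+ x. ennreal ((f x / g x) powr a) \<partial>?Q)"
    by (intro nn_integral_cong_AE) (auto elim!: eventually_mono)
  also have "\<dots> = (\<integral>\<^sup>+ x. ennreal (g x) * ennreal ((f x / g x) powr a) \<partial>L)"
    by (intro nn_integral_density) auto
  also have "\<dots> = (\<integral>\<^sup>+ x. ennreal (renyi_integrand a (f x) (g x)) \<partial>L)"
    using g_pos by (intro nn_integral_cong) (simp add: renyi_integrand_def ennreal_mult'[symmetric] less_imp_le)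
  finally show "renyi_moment a (density L f) ?Q = (\<integral>\<^sup>+ x. ennreal (renyi_integrand a (f x) (g x)) \<partial>L)" .
qed

lemma renyi_div_density_le:
  fixes f g :: "'a \<Rightarrow> real"
  assumes [measurable]: "f \<in> borel_measurable L" "g \<in> borel_measurable L"
    and f_pos: "\<And>x. 0 < f x" and g_pos: "\<And>x. 0 < g x"
    and Q: "prob_space (density L g)" and a: "1 < a"
    and bound: "(\<integral>\<^sup>+ x. ennreal (renyi_integrand a (f x) (g x)) \<partial>L) \<le> ennreal (exp ((a - 1) * e))"
  shows "renyi_div a (density L f) (density L g) \<le> ereal e"
proof (rule renyi_div_leI[OF _ _ _ _ a])
  note moment = renyi_moment_density[OF _ _ less_imp_le[OF f_pos] g_pos Q]
  show "absolutely_continuous (density L g) (density L f)" by (rule moment(1)) simp_all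
  show "renyi_moment a (density L f) (density L g) \<le> ennreal (exp ((a - 1) * e))"
    using bound by (simp add: moment(2))
  show "renyi_moment a (density L f) (density L g) \<noteq> 0"
  proof
    assume "renyi_moment a (density L f) (density L g) = 0"
    then have "AE x in L. ennreal (renyi_integrand a (f x) (g x)) = 0"
      by (simp add: moment(2) nn_integral_0_iff_AE)
    moreover have "ennreal (renyi_integrand a (f x) (g x)) \<noteq> 0" for x
      using renyi_integrand_pos[of "f x" "g x" a] f_pos g_pos by (simp add: ennreal_eq_0_iff not_le)
    ultimately have "AE x in L. False"
      by simp
    then have "AE x in density L g. False"
      by (subst AE_density) (auto elim: eventually_mono)
    then show False by (simp add: prob_space.AE_False[OF Q])
  qed
qed simp

lemma le_add_scaled_powr:
  fixes r K a :: real
  assumes r: "0 \<le> r" and K: "0 < K" and a: "1 < a"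
  shows "r \<le> K + K powr (1 - a) * r powr a"
proof (cases "r \<le> K")
  case True
  then show ?thesis using K r by (simp add: add_increasing2)
next
  case False
  then have "0 < r" using K by simp
  then have "r = r powr (1 - a) * r powr a"
    by (simp add: powr_add[symmetric])
  also have "\<dots> \<le> K powr (1 - a) * r powr a"
    using a K False by (intro mult_right_mono powr_mono2') auto
  also have "\<dots> \<le> K + K powr (1 - a) * r powr a"
    using K by simp
  finally show ?thesis .
qed

lemma measure_le_of_renyi_div_le:
  assumes P: "prob_space P" and Q: "prob_space Q"
    and R: "renyi_div a P Q \<le> ereal e" and a: "1 < a" and d: "0 < \<delta>"
    and A: "A \<in> sets P"
  shows "measure P A \<le> exp (e + ln (1 / \<delta>) / (a - 1)) * measure Q A + \<delta>"
proof -
  interpret P: prob_space P by (rule P)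
  interpret Q: prob_space Q by (rule Q)
  note D = renyi_div_leD[OF R a]
  define K where "K = exp (e + ln (1 / \<delta>) / (a - 1))"
  let ?r = "\<lambda>x. enn2real (RN_deriv Q P x)"
  have K_pos: "0 < K" by (simp add: K_def)
  have AQ: "A \<in> sets Q" using A D(1) by simp
  have K_delta: "K powr (1 - a) * exp ((a - 1) * e) = \<delta>"
  proof -
    have "K powr (1 - a) * exp ((a - 1) * e) = exp ((1 - a) * (e + ln (1 / \<delta>) / (a - 1)) + (a - 1) * e)"
      by (simp add: K_def powr_def exp_add[symmetric])
    also have "(1 - a) * (e + ln (1 / \<delta>) / (a - 1)) + (a - 1) * e = ln \<delta>"
      using a d by (simp add: field_simps ln_div)
    finally show ?thesis using d by simp
  qed
  have "emeasure P A = emeasure (density Q (RN_deriv Q P)) A"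
    using D by (simp add: Q.density_RN_deriv)
  also have "\<dots> = (\<integral>\<^sup>+x. RN_deriv Q P x * indicator A x \<partial>Q)"
    using AQ by (intro emeasure_density) auto
  also have "\<dots> = (\<integral>\<^sup>+x. ennreal (?r x) * indicator A x \<partial>Q)"
    using D Q.RN_deriv_finite[of P] prob_space_imp_sigma_finite[OF P]
    by (intro nn_integral_cong_AE) (auto simp: ennreal_enn2real_if elim!: eventually_mono)
  also have "\<dots> \<le> (\<integral>\<^sup>+x. ennreal K * indicator A x + ennreal (K powr (1 - a)) * ennreal (?r x powr a) \<partial>Q)"
  proof (rule nn_integral_mono)
    fix x
    have "?r x \<le> K + K powr (1 - a) * ?r x powr a"
      using a K_pos by (intro le_add_scaled_powr) auto
    then have "ennreal (?r x) \<le> ennreal (K + K powr (1 - a) * ?r x powr a)"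
      by (rule ennreal_leI)
    also have "\<dots> = ennreal K + ennreal (K powr (1 - a)) * ennreal (?r x powr a)"
      using K_pos by (simp add: ennreal_mult')
    finally have "ennreal (?r x) \<le> ennreal K + ennreal (K powr (1 - a)) * ennreal (?r x powr a)" .
    then show "ennreal (?r x) * indicator A x \<le> ennreal K * indicator A x + ennreal (K powr (1 - a)) * ennreal (?r x powr a)"
      by (cases "x \<in> A") auto
  qed
  also have "\<dots> = ennreal K * emeasure Q A + ennreal (K powr (1 - a)) * renyi_moment a P Q"
    using AQ by (simp add: nn_integral_add nn_integral_cmult)
  also have "\<dots> \<le> ennreal K * emeasure Q A + ennreal (K powr (1 - a)) * ennreal (exp ((a - 1) * e))"
    using D(3) by (intro add_left_mono mult_left_mono) auto
  also have "\<dots> = ennreal (K * measure Q A + \<delta>)"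
    using d K_pos by (simp add: Q.emeasure_eq_measure K_delta ennreal_mult'[symmetric]
        ennreal_plus[symmetric] del: ennreal_plus)
  finally have "ennreal (measure P A) \<le> ennreal (K * measure Q A + \<delta>)"
    by (simp add: P.emeasure_eq_measure del: ennreal_plus)
  then show ?thesis
    using d K_pos unfolding K_def[symmetric] by (simp add: ennreal_le_iff del: ennreal_plus)
qed

lemma le_exp_INF_mult_add:
  fixes X Y \<delta> :: real and f :: "'a \<Rightarrow> real"
  assumes "S \<noteq> {}" and Y: "0 \<le> Y" and le: "\<And>a. a \<in> S \<Longrightarrow> X \<le> exp (f a) * Y + \<delta>"
  shows "X \<le> exp (INF a\<in>S. f a) * Y + \<delta>"
proof (cases "X \<le> \<delta>")
  case True
  then show ?thesis using Y by (simp add: add_increasing)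
next
  case False
  obtain a0 where "a0 \<in> S" using \<open>S \<noteq> {}\<close> by blast
  have Y_pos: "0 < Y"
  proof (rule ccontr)
    assume "\<not> 0 < Y"
    then have "Y = 0" using Y by simp
    then show False using le[OF \<open>a0 \<in> S\<close>] False by simp
  qed
  have "ln ((X - \<delta>) / Y) \<le> f a" if "a \<in> S" for a
  proof -
    have "(X - \<delta>) / Y \<le> exp (f a)"
      using le[OF that] Y_pos by (simp add: pos_divide_le_eq)
    then have "exp (ln ((X - \<delta>) / Y)) \<le> exp (f a)"
      using False Y_pos by simp
    then show ?thesis by simp
  qed
  then have "ln ((X - \<delta>) / Y) \<le> (INF a\<in>S. f a)"
    using \<open>S \<noteq> {}\<close> by (intro cINF_greatest) auto
  then have "exp (ln ((X - \<delta>) / Y)) \<le> exp (INF a\<in>S. f a)"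
    by simp
  then have "(X - \<delta>) / Y \<le> exp (INF a\<in>S. f a)"
    using False Y_pos by simp
  then show ?thesis
    using Y_pos by (simp add: pos_divide_le_eq)
qed

lemma dp_INF_of_rdp:
  assumes prob: "\<And>D. prob_space (M D)" and rdp: "\<And>a. 1 < a \<Longrightarrow> rdp a (e a) M" and d: "0 < \<delta>"
  shows "dp (INF a\<in>{1<..}. e a + ln (1 / \<delta>) / (a - 1)) \<delta> M"
  unfolding dp_def
proof (intro allI impI ballI)
  fix D D' A assume adj: "adjacent D D'" and A: "A \<in> sets (M D)"
  show "measure (M D) A \<le> exp (INF a\<in>{1<..}. e a + ln (1 / \<delta>) / (a - 1)) * measure (M D') A + \<delta>"
  proof (rule le_exp_INF_mult_add)
    fix a :: real assume "a \<in> {1<..}"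
    then have a: "1 < a" by simp
    have "renyi_div a (M D) (M D') \<le> ereal (e a)"
      using rdp[OF a] adj by (simp add: rdp_def)
    then show "measure (M D) A \<le> exp (e a + ln (1 / \<delta>) / (a - 1)) * measure (M D') A + \<delta>"
      using a d A by (intro measure_le_of_renyi_div_le prob)
  qed auto
qed

section \<open>Affine invariance of Renyi moments\<close>

definition affine_inv :: "('d::finite \<Rightarrow> real) \<Rightarrow> ('d \<Rightarrow> real) \<Rightarrow> ('d \<Rightarrow> real) \<Rightarrow> ('d \<Rightarrow> real)" where
  "affine_inv k b x = (\<lambda>j. (x j - b j) / k j)"

lemma measurable_affine_inv[measurable]:
  "affine_inv k b \<in> (lborel_vec :: ('d::finite \<Rightarrow> real) measure) \<rightarrow>\<^sub>M lborel_vec"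
proof -
  have "affine_inv k b \<in> (vspace :: ('d \<Rightarrow> real) measure) \<rightarrow>\<^sub>M vspace"
    unfolding affine_inv_def vspace_def by (rule measurable_PiM_single') measurable
  then show ?thesis by (simp add: measurable_cong_sets[OF sets_lborel_vec sets_lborel_vec])
qed

lemma emeasure_lborel_affine_preimage:
  fixes k b :: real
  assumes k: "0 < k" and A[measurable]: "A \<in> sets borel"
  shows "emeasure lborel {x. (x - b) / k \<in> A} = ennreal k * emeasure lborel A"
proof -
  have "emeasure lborel {x. (x - b) / k \<in> A} = (\<integral>\<^sup>+x. indicator {x. (x - b) / k \<in> A} x \<partial>lborel)"
    by simp
  also have "\<dots> = ennreal k * (\<integral>\<^sup>+x. indicator {x. (x - b) / k \<in> A} (b + k * x) \<partial>lborel)"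
    using nn_integral_real_affine[where c=k and t=b and f="indicator {x. (x - b) / k \<in> A}"] k
    by simp
  also have "(\<lambda>x. indicator {x. (x - b) / k \<in> A} (b + k * x) :: ennreal) = indicator A"
    using k by (auto simp: indicator_def fun_eq_iff)
  finally show ?thesis by simp
qed

lemma distr_affine_inv:
  fixes k :: "'d::finite \<Rightarrow> real"
  assumes k: "\<And>j. 0 < k j"
  shows "distr lborel_vec lborel_vec (affine_inv k b) = density lborel_vec (\<lambda>_. ennreal (\<Prod>j\<in>UNIV. k j))"
proof -
  let ?K = "\<Prod>j\<in>UNIV. k j"
  have K_pos: "0 < ?K" using k by (simp add: prod_pos)
  have "ennreal (1 / ?K) * ennreal ?K = ennreal (1 / ?K * ?K)"
    using K_pos by (intro ennreal_mult'[symmetric]) simp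
  then have inv_K: "ennreal (1 / ?K) * ennreal ?K = 1"
    using k by (simp add: less_imp_neq[symmetric])
  have "density (distr lborel_vec lborel_vec (affine_inv k b)) (\<lambda>_. ennreal (1 / ?K)) = lborel_vec"
    unfolding lborel_vec_def
  proof (rule lborel_factors.PiM_eqI)
    fix A :: "'d \<Rightarrow> real set" assume A: "\<And>i. i \<in> UNIV \<Longrightarrow> A i \<in> sets lborel"
    have "Pi\<^sub>E UNIV A \<in> sets (PiM UNIV (\<lambda>_. lborel :: real measure))"
      using A by (intro sets_PiM_I_finite) auto
    moreover have "affine_inv k b -` Pi\<^sub>E UNIV A = Pi\<^sub>E UNIV (\<lambda>j. {x. (x - b j) / k j \<in> A j})"
      by (auto simp: affine_inv_def PiE_UNIV_domain Pi_iff)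
    ultimately have "emeasure (distr (PiM UNIV (\<lambda>_. lborel)) (PiM UNIV (\<lambda>_. lborel)) (affine_inv k b)) (Pi\<^sub>E UNIV A)
        = (\<Prod>j\<in>UNIV. emeasure lborel {x. (x - b j) / k j \<in> A j})"
      using A measurable_affine_inv[of k b]
      by (simp add: lborel_vec_def emeasure_distr space_PiM lborel_factors.emeasure_PiM)
    also have "\<dots> = (\<Prod>j\<in>UNIV. ennreal (k j) * emeasure lborel (A j))"
      using A k by (intro prod.cong refl emeasure_lborel_affine_preimage) auto
    also have "\<dots> = ennreal ?K * (\<Prod>j\<in>UNIV. emeasure lborel (A j))"
      using k by (simp add: prod.distrib prod_ennreal less_imp_le)
    finally show "emeasure (density (distr (PiM UNIV (\<lambda>_. lborel)) (PiM UNIV (\<lambda>_. lborel)) (affine_inv k b))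
        (\<lambda>_. ennreal (1 / ?K))) (Pi\<^sub>E UNIV A) = (\<Prod>j\<in>UNIV. emeasure lborel (A j))"
      using \<open>Pi\<^sub>E UNIV A \<in> sets (PiM UNIV (\<lambda>_. lborel))\<close>
      by (simp add: emeasure_density_const mult.assoc[symmetric] inv_K)
  qed simp_all
  then have "density lborel_vec (\<lambda>_. ennreal ?K)
      = density (density (distr lborel_vec lborel_vec (affine_inv k b)) (\<lambda>_. ennreal (1 / ?K))) (\<lambda>_. ennreal ?K)"
    by simp
  also have "\<dots> = distr lborel_vec lborel_vec (affine_inv k b)"
    by (subst density_density_eq) (auto simp: inv_K density_1)
  finally show ?thesis ..
qed

lemma nn_integral_affine_inv:
  fixes k :: "'d::finite \<Rightarrow> real"
  assumes k: "\<And>j. 0 < k j" and f[measurable]: "f \<in> borel_measurable lborel_vec"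
  shows "(\<integral>\<^sup>+x. f (affine_inv k b x) \<partial>lborel_vec) = ennreal (\<Prod>j\<in>UNIV. k j) * (\<integral>\<^sup>+y. f y \<partial>lborel_vec)"
proof -
  have "(\<integral>\<^sup>+x. f (affine_inv k b x) \<partial>lborel_vec) = (\<integral>\<^sup>+y. f y \<partial>distr lborel_vec lborel_vec (affine_inv k b))"
    by (intro nn_integral_distr[symmetric]) auto
  also have "\<dots> = ennreal (\<Prod>j\<in>UNIV. k j) * (\<integral>\<^sup>+y. f y \<partial>lborel_vec)"
    by (simp add: distr_affine_inv[OF k] nn_integral_density nn_integral_cmult)
  finally show ?thesis .
qed

lemma normal_density_affine:
  fixes k \<sigma> \<nu> b x :: real
  assumes k: "0 < k" and s: "0 < \<sigma>"
  shows "normal_density (k * \<nu> + b) (k * \<sigma>) x = normal_density \<nu> \<sigma> ((x - b) / k) / k"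
proof -
  have "sqrt (2 * pi * (k * \<sigma>)\<^sup>2) = k * sqrt (2 * pi * \<sigma>\<^sup>2)"
    using k by (simp add: power_mult_distrib real_sqrt_mult mult_ac)
  moreover have "-(x - (k * \<nu> + b))\<^sup>2 / (2 * (k * \<sigma>)\<^sup>2) = -((x - b) / k - \<nu>)\<^sup>2 / (2 * \<sigma>\<^sup>2)"
    using k s by (simp add: field_simps power2_eq_square)
  ultimately show ?thesis
    unfolding normal_density_def by simp
qed

lemma gauss_density_affine:
  fixes k :: "'d::finite \<Rightarrow> real"
  assumes k: "\<And>j. 0 < k j" and s: "0 < \<sigma>"
  shows "gauss_density (\<lambda>j. k j * \<sigma>) (\<lambda>j. k j * \<nu> j + b j) x
       = gauss_density (\<lambda>_. \<sigma>) \<nu> (affine_inv k b x) / (\<Prod>j\<in>UNIV. k j)"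
  unfolding gauss_density_def affine_inv_def
  using k s by (simp add: normal_density_affine prod_dividef)

lemma mixture_density_affine:
  fixes k :: "'d::finite \<Rightarrow> real"
  assumes k: "\<And>j. 0 < k j" and s: "0 < \<sigma>"
  shows "mixture_density q n (\<lambda>j. k j * \<sigma>) (\<lambda>m j. k j * \<nu> m j + b j) x
       = mixture_density q n (\<lambda>_. \<sigma>) \<nu> (affine_inv k b x) / (\<Prod>j\<in>UNIV. k j)"
  unfolding mixture_density_def
  by (simp add: gauss_density_affine[OF k s] sum_divide_distrib)

lemma nn_integral_renyi_integrand_affine:
  fixes k :: "'d::finite \<Rightarrow> real" and f g :: "('d \<Rightarrow> real) \<Rightarrow> real"
  assumes k: "\<And>j. 0 < k j" and [measurable]: "f \<in> borel_measurable lborel_vec" "g \<in> borel_measurable lborel_vec"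
  defines "K \<equiv> \<Prod>j\<in>UNIV. k j"
  shows "(\<integral>\<^sup>+x. ennreal (renyi_integrand a (f (affine_inv k b x) / K) (g (affine_inv k b x) / K)) \<partial>lborel_vec)
       = (\<integral>\<^sup>+y. ennreal (renyi_integrand a (f y) (g y)) \<partial>lborel_vec)"
proof -
  have K_pos: "0 < K" unfolding K_def using k by (simp add: prod_pos)
  have "(\<integral>\<^sup>+x. ennreal (renyi_integrand a (f (affine_inv k b x) / K) (g (affine_inv k b x) / K)) \<partial>lborel_vec)
      = (\<integral>\<^sup>+x. ennreal (1 / K) * ennreal (renyi_integrand a (f (affine_inv k b x)) (g (affine_inv k b x))) \<partial>lborel_vec)"
    using K_pos by (intro nn_integral_cong) (simp add: renyi_integrand_divide ennreal_mult'[symmetric])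
  also have "\<dots> = ennreal (1 / K) * (\<integral>\<^sup>+x. ennreal (renyi_integrand a (f (affine_inv k b x)) (g (affine_inv k b x))) \<partial>lborel_vec)"
    by (simp add: nn_integral_cmult)
  also have "\<dots> = ennreal (1 / K) * (ennreal K * (\<integral>\<^sup>+y. ennreal (renyi_integrand a (f y) (g y)) \<partial>lborel_vec))"
    unfolding K_def by (subst nn_integral_affine_inv[OF k]) auto
  also have "\<dots> = (\<integral>\<^sup>+y. ennreal (renyi_integrand a (f y) (g y)) \<partial>lborel_vec)"
    using K_pos by (simp add: mult.assoc[symmetric] ennreal_mult'[symmetric])
  finally show ?thesis .
qed

section \<open>Clipping and the effective noise multiplier\<close>

lemma sum_inverse_square_pos:
  fixes sg :: "'g::finite \<Rightarrow> real"
  assumes "\<And>g. 0 < sg g"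
  shows "0 < (\<Sum>g\<in>UNIV. 1 / (sg g)\<^sup>2)"
  using assms by (intro sum_pos divide_pos_pos zero_less_power) simp_all

lemma sigma_eff_pos:
  fixes sg :: "'g::finite \<Rightarrow> real"
  assumes "0 < \<beta>" and "\<And>g. 0 < sg g"
  shows "0 < sigma_eff \<beta> sg"
  unfolding sigma_eff_def using assms sum_inverse_square_pos[of sg] by simp

lemma beta_sigma_eff_squared:
  fixes sg :: "'g::finite \<Rightarrow> real"
  assumes "0 < \<beta>" and "\<And>g. 0 < sg g"
  shows "(\<beta> * sigma_eff \<beta> sg)\<^sup>2 * (\<Sum>g\<in>UNIV. 1 / (sg g)\<^sup>2) = 1"
  unfolding sigma_eff_def using assms sum_inverse_square_pos[of sg] by (simp add: power_divide)

lemma sum_squares_clip_group_le: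
  fixes v :: "'d::finite \<Rightarrow> real" and grp :: "'d \<Rightarrow> 'g"
  assumes C: "0 < C g"
  shows "(\<Sum>j | grp j = g. (clip grp C v j)\<^sup>2) \<le> (C g)\<^sup>2"
proof -
  let ?n = "gnorm grp g v" and ?M = "max 1 (gnorm grp g v / C g)"
  have n_nonneg: "0 \<le> ?n" unfolding gnorm_def by (simp add: sum_nonneg)
  have "(\<Sum>j | grp j = g. (clip grp C v j)\<^sup>2) = (\<Sum>j | grp j = g. (v j)\<^sup>2) / ?M\<^sup>2"
    by (simp add: clip_def power_divide sum_divide_distrib)
  also have "\<dots> = (?n / ?M)\<^sup>2"
    unfolding gnorm_def by (simp add: power_divide sum_nonneg)
  also have "\<dots> \<le> (C g)\<^sup>2"
  proof (rule power_mono)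
    have "?n \<le> ?M * C g" using C by (simp add: pos_divide_le_eq[symmetric])
    then show "?n / ?M \<le> C g" by (simp add: divide_le_eq mult.commute)
  qed (use n_nonneg in simp)
  finally show ?thesis .
qed

lemma l2_rescaled_clip_le_1:
  fixes v :: "'d::finite \<Rightarrow> real" and grp :: "'d \<Rightarrow> 'g::finite" and sg :: "'g \<Rightarrow> real"
  assumes C: "\<And>g. 0 < C g" and sg: "\<And>g. 0 < sg g" and \<beta>: "0 < \<beta>"
  defines "se \<equiv> sigma_eff \<beta> sg"
  shows "l2 (\<lambda>j. \<beta> * clip grp C v j / (sg (grp j) * C (grp j) / se)) \<le> 1"
proof -
  have se: "0 < se" unfolding se_def using \<beta> sg by (rule sigma_eff_pos)
  let ?c = "\<lambda>g. (\<beta> * se / (sg g * C g))\<^sup>2"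
  have "(\<Sum>j\<in>UNIV. (\<beta> * clip grp C v j / (sg (grp j) * C (grp j) / se))\<^sup>2)
      = (\<Sum>j\<in>UNIV. ?c (grp j) * (clip grp C v j)\<^sup>2)"
    using se by (simp add: power_divide power_mult_distrib field_simps)
  also have "\<dots> = (\<Sum>g\<in>UNIV. \<Sum>j | j \<in> UNIV \<and> grp j = g. ?c (grp j) * (clip grp C v j)\<^sup>2)"
    by (rule sum.group[symmetric]) auto
  also have "\<dots> = (\<Sum>g\<in>UNIV. ?c g * (\<Sum>j | grp j = g. (clip grp C v j)\<^sup>2))"
    by (auto simp: sum_distrib_left intro!: sum.cong)
  also have "\<dots> \<le> (\<Sum>g\<in>UNIV. ?c g * (C g)\<^sup>2)"
    by (intro sum_mono mult_left_mono sum_squares_clip_group_le C) auto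
  also have "\<dots> = (\<beta> * se)\<^sup>2 * (\<Sum>g\<in>UNIV. 1 / (sg g)\<^sup>2)"
    using C sg by (simp add: sum_distrib_left field_simps power2_eq_square less_imp_neq[symmetric])
  also have "\<dots> = 1"
    unfolding se_def using \<beta> sg by (rule beta_sigma_eff_squared)
  finally show ?thesis unfolding l2_def by simp
qed

lemma adjacent_map: "adjacent D D' \<Longrightarrow> adjacent (map f D) (map f D')"
  unfolding adjacent_def remove_nth_def by (auto simp: take_map drop_map)

locale sma_dp_sgd =
  fixes grp :: "'d::finite \<Rightarrow> 'g::finite" and C :: "'g \<Rightarrow> real" and sig :: "nat \<Rightarrow> 'g \<Rightarrow> real"
    and \<beta> :: real and q :: "nat \<Rightarrow> real"
    and grad :: "nat \<Rightarrow> (nat \<Rightarrow> 'd \<Rightarrow> real) \<Rightarrow> 'x \<Rightarrow> ('d \<Rightarrow> real)"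
    and b :: "nat \<Rightarrow> (nat \<Rightarrow> 'd \<Rightarrow> real) \<Rightarrow> ('d \<Rightarrow> real)"
  assumes C_pos: "\<And>g. 0 < C g" and sig_pos: "\<And>t g. 0 < sig t g"
    and grad_meas: "\<And>t x. (\<lambda>h. grad t h x) \<in> hspace t \<rightarrow>\<^sub>M vspace"
    and b_meas: "\<And>t. b t \<in> hspace t \<rightarrow>\<^sub>M vspace"
begin

lemma measurable_grad_component[measurable]: "(\<lambda>h. grad t h x j) \<in> borel_measurable (hspace t)"
  using measurable_compose[OF grad_meas measurable_vspace_component] .

lemma measurable_b_component[measurable]: "(\<lambda>h. b t h j) \<in> borel_measurable (hspace t)"
  using measurable_compose[OF b_meas measurable_vspace_component] .

definition step_mean :: "nat \<Rightarrow> 'x list \<Rightarrow> (nat \<Rightarrow> 'd \<Rightarrow> real) \<Rightarrow> (nat \<Rightarrow> bool) \<Rightarrow> 'd \<Rightarrow> real" where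
  "step_mean t D h m j = \<beta> * (\<Sum>i<length D. if m i then clip grp C (grad t h (D ! i)) j else 0) + b t h j"

definition step_density :: "nat \<Rightarrow> 'x list \<Rightarrow> (nat \<Rightarrow> 'd \<Rightarrow> real) \<Rightarrow> ('d \<Rightarrow> real) \<Rightarrow> real" where
  "step_density t D h =
     mixture_density (q t) (length D) (\<lambda>j. sig t (grp j) * C (grp j)) (step_mean t D h)"

lemma noise_std_pos: "0 < sig t (grp j) * C (grp j)"
  using sig_pos C_pos by simp

lemma sma_step_eq_density:
  "sma_step grp C sig \<beta> q grad b t D h = density lborel_vec (\<lambda>x. ennreal (step_density t D h x))"
  unfolding sma_step_def step_density_def step_mean_def
  by (intro distr_mask_noise_eq_density noise_std_pos)

lemma step_density_pos: "0 < step_density t D h x"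
  unfolding step_density_def by (intro mixture_density_pos noise_std_pos)

lemma measurable_step_mean[measurable]: "(\<lambda>h. step_mean t D h m j) \<in> borel_measurable (hspace t)"
  unfolding step_mean_def by measurable

lemma measurable_step_density[measurable]:
  "(\<lambda>(h, x). step_density t D h x) \<in> borel_measurable (hspace t \<Otimes>\<^sub>M lborel_vec)"
proof -
  have [measurable]: "(\<lambda>x. x j) \<in> borel_measurable lborel_vec" for j :: 'd
    unfolding lborel_vec_def by measurable
  show ?thesis
    unfolding step_density_def mixture_density_def gauss_density_def normal_density_def by measurable
qed

lemma measurable_sma_step:
  "(\<lambda>h. sma_step grp C sig \<beta> q grad b t D h) \<in> hspace t \<rightarrow>\<^sub>M prob_algebra vspace"
  unfolding sma_step_def
proof (rule measurable_distr_prob_space2)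
  let ?MZ = "poisson_mask (q t) (length D) \<Otimes>\<^sub>M gauss_noise (\<lambda>j. sig t (grp j) * C (grp j))"
  interpret M: prob_space "poisson_mask (q t) (length D)" by (rule prob_space_poisson_mask)
  interpret Z: prob_space "gauss_noise (\<lambda>j. sig t (grp j) * C (grp j))"
    by (intro prob_space_gauss_noise noise_std_pos)
  interpret MZ: pair_prob_space "poisson_mask (q t) (length D)" "gauss_noise (\<lambda>j. sig t (grp j) * C (grp j))" ..
  show "(\<lambda>_. ?MZ) \<in> hspace t \<rightarrow>\<^sub>M prob_algebra ?MZ"
    by (intro measurable_const) (simp add: space_prob_algebra MZ.prob_space_axioms)
  show "(\<lambda>(h, m, z) j. \<beta> * (\<Sum>i<length D. if m i then clip grp C (grad t h (D ! i)) j else 0) + b t h j + z j)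
      \<in> hspace t \<Otimes>\<^sub>M ?MZ \<rightarrow>\<^sub>M vspace"
  proof (rule measurable_into_vspace)
    note measurable_gauss_noise_component[measurable]
    show "(\<lambda>x. (case x of (h, m, z) \<Rightarrow> \<lambda>j. \<beta> * (\<Sum>i<length D. if m i then clip grp C (grad t h (D ! i)) j else 0) + b t h j + z j) j)
        \<in> borel_measurable (hspace t \<Otimes>\<^sub>M ?MZ)" for j
      by (simp only: case_prod_beta) measurable
  qed
qed

lemma step_renyi_moment_le:
  assumes \<beta>: "0 < \<beta>" and q: "q t \<in> {0..1}" and valid: "valid_sgm_bound TYPE('d) eps_sgm"
    and a: "1 < a" and adj: "adjacent D D'"
  shows "(\<integral>\<^sup>+x. ennreal (renyi_integrand a (step_density t D h x) (step_density t D' h x)) \<partial>lborel_vec)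
     \<le> ennreal (exp ((a - 1) * eps_sgm a (q t) (sigma_eff \<beta> (sig t))))"
proof -
  define se where "se = sigma_eff \<beta> (sig t)"
  have se: "0 < se" unfolding se_def using \<beta> sig_pos by (rule sigma_eff_pos)
  define k where "k j = sig t (grp j) * C (grp j) / se" for j
  have k: "0 < k j" for j unfolding k_def using se noise_std_pos by simp
  define w where "w x j = \<beta> * clip grp C (grad t h x) j / k j" for x j
  define \<psi> where "\<psi> E = mixture_density (q t) (length E) (\<lambda>_. se)
      (\<lambda>m j. \<Sum>i<length E. if m i then (E ! i) j else 0)" for E :: "('d \<Rightarrow> real) list"
  have "step_mean t E h = (\<lambda>m j. k j * (\<Sum>i<length E. if m i then (map w E ! i) j else 0) + b t h j)" for E
    unfolding step_mean_def w_def using k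
    by (auto simp: fun_eq_iff sum_distrib_left less_imp_neq[symmetric] intro!: sum.cong)
  moreover have "(\<lambda>j. sig t (grp j) * C (grp j)) = (\<lambda>j. k j * se)"
    unfolding k_def using se by (auto simp: fun_eq_iff)
  ultimately have scale: "step_density t E h x = \<psi> (map w E) (affine_inv k (b t h) x) / (\<Prod>j\<in>UNIV. k j)" for E x
    unfolding step_density_def \<psi>_def by (simp add: mixture_density_affine[OF k se])
  have sgm: "sgm (q t) se E = density lborel_vec (\<lambda>x. ennreal (\<psi> E x))" for E
    unfolding \<psi>_def by (rule sgm_eq_density[OF se])
  have "(\<integral>\<^sup>+x. ennreal (renyi_integrand a (step_density t D h x) (step_density t D' h x)) \<partial>lborel_vec)
      = (\<integral>\<^sup>+y. ennreal (renyi_integrand a (\<psi> (map w D) y) (\<psi> (map w D') y)) \<partial>lborel_vec)"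
    unfolding scale by (rule nn_integral_renyi_integrand_affine[OF k]) (simp_all add: \<psi>_def)
  also have "\<dots> = renyi_moment a (sgm (q t) se (map w D)) (sgm (q t) se (map w D'))"
    unfolding sgm
    by (rule renyi_moment_density(2)[symmetric])
      (auto simp: \<psi>_def mixture_density_nonneg mixture_density_pos se intro!: prob_space_mixture_density)
  also have "\<dots> \<le> ennreal (exp ((a - 1) * eps_sgm a (q t) se))"
  proof (rule renyi_div_leD(3)[OF _ a])
    have "adjacent (map w D) (map w D')" using adj by (rule adjacent_map)
    moreover have "\<forall>v \<in> set (map w D) \<union> set (map w D'). l2 v \<le> 1"
      unfolding w_def k_def se_def using l2_rescaled_clip_le_1[OF C_pos sig_pos \<beta>] by auto
    ultimately show "renyi_div a (sgm (q t) se (map w D)) (sgm (q t) se (map w D')) \<le> ereal (eps_sgm a (q t) se)"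
      using valid q se a unfolding valid_sgm_bound_def by blast
  qed
  finally show ?thesis unfolding se_def .
qed

end

section \<open>Densities of release histories\<close>

definition lborel_hist :: "nat \<Rightarrow> (nat \<Rightarrow> 'd::finite \<Rightarrow> real) measure" where
  "lborel_hist T = PiM {..<T} (\<lambda>_. lborel_vec)"

lemma sets_lborel_hist[measurable_cong]: "sets (lborel_hist T) = sets (hspace T)"
  unfolding lborel_hist_def hspace_def by (rule sets_PiM_cong) (auto simp: sets_lborel_vec)

interpretation lborel_vec_factors: product_sigma_finite "\<lambda>_::nat. lborel_vec :: ('d::finite \<Rightarrow> real) measure"
  by (auto simp: product_sigma_finite_def intro: sigma_finite_lborel_vec)

lemma measurable_history_restrict[measurable]:
  "(\<lambda>h. restrict h {..<T}) \<in> hspace (Suc T) \<rightarrow>\<^sub>M (hspace T :: (nat \<Rightarrow> 'd::finite \<Rightarrow> real) measure)"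
  unfolding hspace_def by (intro measurable_restrict_subset') auto

lemma measurable_history_last[measurable]:
  "(\<lambda>h. h T) \<in> hspace (Suc T) \<rightarrow>\<^sub>M (vspace :: ('d::finite \<Rightarrow> real) measure)"
  unfolding hspace_def by (intro measurable_component_singleton) auto

lemma measurable_history_update[measurable]:
  "(\<lambda>(h, s). h(T := s)) \<in> hspace T \<Otimes>\<^sub>M vspace \<rightarrow>\<^sub>M (hspace (Suc T) :: (nat \<Rightarrow> 'd::finite \<Rightarrow> real) measure)"
  unfolding hspace_def lessThan_Suc by (rule measurable_add_dim)

lemma restrict_lborel_hist: "h \<in> space (lborel_hist T) \<Longrightarrow> restrict h {..<T} = h"
  unfolding lborel_hist_def by (simp add: space_PiM PiE_def extensional_restrict)

lemma measurable_history_section: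
  assumes "h \<in> space (lborel_hist T)" and "case_prod p \<in> borel_measurable (hspace T \<Otimes>\<^sub>M lborel_vec)"
  shows "p h \<in> borel_measurable lborel_vec"
proof -
  have "h \<in> space (hspace T)"
    using assms(1) by (simp add: sets_eq_imp_space_eq[OF sets_lborel_hist])
  from measurable_Pair2[OF assms(2) this] show ?thesis by simp
qed

lemma nn_integral_lborel_hist_Suc:
  assumes "f \<in> borel_measurable (lborel_hist (Suc T) :: (nat \<Rightarrow> 'd::finite \<Rightarrow> real) measure)"
  shows "(\<integral>\<^sup>+h. f h \<partial>lborel_hist (Suc T)) = (\<integral>\<^sup>+h. (\<integral>\<^sup>+s. f (h(T := s)) \<partial>lborel_vec) \<partial>lborel_hist T)"
  using assms unfolding lborel_hist_def lessThan_Suc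
  by (intro lborel_vec_factors.product_nn_integral_insert) auto

lemma density_bind_history_update:
  fixes f :: "(nat \<Rightarrow> 'd::finite \<Rightarrow> real) \<Rightarrow> real" and p :: "(nat \<Rightarrow> 'd \<Rightarrow> real) \<Rightarrow> ('d \<Rightarrow> real) \<Rightarrow> real"
  assumes [measurable]: "f \<in> borel_measurable (lborel_hist T)" "case_prod p \<in> borel_measurable (hspace T \<Otimes>\<^sub>M lborel_vec)"
    and f_nonneg: "\<And>h. 0 \<le> f h" and p_nonneg: "\<And>h s. 0 \<le> p h s"
    and K: "(\<lambda>h. distr (density lborel_vec (p h)) (hspace (Suc T)) (\<lambda>s. h(T := s)))
      \<in> hspace T \<rightarrow>\<^sub>M subprob_algebra (hspace (Suc T))"
  shows "density (lborel_hist T) f \<bind> (\<lambda>h. distr (density lborel_vec (p h)) (hspace (Suc T)) (\<lambda>s. h(T := s)))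
       = density (lborel_hist (Suc T)) (\<lambda>h. f (restrict h {..<T}) * p (restrict h {..<T}) (h T))"
proof (rule measure_eqI)
  let ?M = "density (lborel_hist T) f"
  let ?K = "\<lambda>h. distr (density lborel_vec (p h)) (hspace (Suc T)) (\<lambda>s. h(T := s))"
  let ?N = "density (lborel_hist (Suc T)) (\<lambda>h. f (restrict h {..<T}) * p (restrict h {..<T}) (h T))"
  have ne: "space ?M \<noteq> {}"
    by (simp add: lborel_hist_def space_PiM PiE_eq_empty_iff)
  have K': "?K \<in> ?M \<rightarrow>\<^sub>M subprob_algebra (hspace (Suc T))"
    using K by (simp add: measurable_cong_sets[OF sets_density[THEN trans, OF sets_lborel_hist] refl])
  show "sets (?M \<bind> ?K) = sets ?N"
    using sets_bind[OF _ ne, of ?K "hspace (Suc T)"] by (simp add: sets_lborel_hist)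
  have p_h: "p h \<in> borel_measurable lborel_vec" if "h \<in> space (lborel_hist T)" for h
    using that by (rule measurable_history_section) simp
  fix A assume "A \<in> sets (?M \<bind> ?K)"
  then have A[measurable]: "A \<in> sets (hspace (Suc T))"
    using sets_bind[OF _ ne, of ?K "hspace (Suc T)"] by simp
  have upd: "(\<lambda>s. h(T := s)) \<in> lborel_vec \<rightarrow>\<^sub>M hspace (Suc T)" if "h \<in> space (lborel_hist T)" for h
    using that sets_eq_imp_space_eq[OF sets_lborel_hist] unfolding hspace_def lessThan_Suc
    by (subst measurable_cong_sets[OF sets_lborel_vec refl]) (rule measurable_component_update, auto)
  have "emeasure (?M \<bind> ?K) A = (\<integral>\<^sup>+h. emeasure (?K h) A \<partial>?M)"
    using ne K' A by (rule emeasure_bind)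
  also have "\<dots> = (\<integral>\<^sup>+h. ennreal (f h) * emeasure (?K h) A \<partial>lborel_hist T)"
    using K' by (intro nn_integral_density) (auto simp: measurable_cong_sets[OF sets_lborel_hist refl])
  also have "\<dots> = (\<integral>\<^sup>+h. \<integral>\<^sup>+s. ennreal (f h * p h s) * indicator A (h(T := s)) \<partial>lborel_vec \<partial>lborel_hist T)"
  proof (rule nn_integral_cong)
    fix h :: "nat \<Rightarrow> 'd \<Rightarrow> real" assume h: "h \<in> space (lborel_hist T)"
    have "emeasure (?K h) A = emeasure (density lborel_vec (p h)) ((\<lambda>s. h(T := s)) -` A)"
      using upd[OF h] by (subst emeasure_distr) (auto simp: measurable_cong_sets[OF sets_density refl])
    also have "\<dots> = (\<integral>\<^sup>+s. ennreal (p h s) * indicator A (h(T := s)) \<partial>lborel_vec)"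
      using measurable_sets[OF upd[OF h] A] p_h[OF h]
      by (subst emeasure_density) (auto intro!: nn_integral_cong simp: indicator_def)
    finally have "ennreal (f h) * emeasure (?K h) A
        = ennreal (f h) * (\<integral>\<^sup>+s. ennreal (p h s) * indicator A (h(T := s)) \<partial>lborel_vec)"
      by simp
    also have "\<dots> = (\<integral>\<^sup>+s. ennreal (f h) * (ennreal (p h s) * indicator A (h(T := s))) \<partial>lborel_vec)"
      by (intro nn_integral_cmult[symmetric] borel_measurable_times_ennreal
          measurable_compose[OF p_h[OF h] measurable_ennreal]
          measurable_compose[OF upd[OF h] borel_measurable_indicator[OF A]])
    finally show "ennreal (f h) * emeasure (?K h) A
        = (\<integral>\<^sup>+s. ennreal (f h * p h s) * indicator A (h(T := s)) \<partial>lborel_vec)"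
      by (simp add: ennreal_mult' f_nonneg mult.assoc)
  qed
  also have "\<dots> = (\<integral>\<^sup>+h. ennreal (f (restrict h {..<T}) * p (restrict h {..<T}) (h T)) * indicator A h \<partial>lborel_hist (Suc T))"
    by (subst nn_integral_lborel_hist_Suc, measurable)
      (auto intro!: nn_integral_cong simp: restrict_lborel_hist)
  also have "\<dots> = emeasure ?N A"
    by (intro emeasure_density[symmetric]) auto
  finally show "emeasure (?M \<bind> ?K) A = emeasure ?N A" .
qed

lemma nn_integral_renyi_integrand_history_Suc_le:
  fixes f g :: "(nat \<Rightarrow> 'd::finite \<Rightarrow> real) \<Rightarrow> real" and p p' :: "(nat \<Rightarrow> 'd \<Rightarrow> real) \<Rightarrow> ('d \<Rightarrow> real) \<Rightarrow> real"
  assumes [measurable]: "f \<in> borel_measurable (lborel_hist T)" "g \<in> borel_measurable (lborel_hist T)"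
    and [measurable]: "case_prod p \<in> borel_measurable (hspace T \<Otimes>\<^sub>M lborel_vec)"
      "case_prod p' \<in> borel_measurable (hspace T \<Otimes>\<^sub>M lborel_vec)"
    and f_nonneg: "\<And>h. 0 \<le> f h" and g_pos: "\<And>h. 0 < g h"
    and p_nonneg: "\<And>h s. 0 \<le> p h s" and p'_pos: "\<And>h s. 0 < p' h s"
    and step: "\<And>h. (\<integral>\<^sup>+s. ennreal (renyi_integrand a (p h s) (p' h s)) \<partial>lborel_vec) \<le> E"
  shows "(\<integral>\<^sup>+h. ennreal (renyi_integrand a (f (restrict h {..<T}) * p (restrict h {..<T}) (h T))
        (g (restrict h {..<T}) * p' (restrict h {..<T}) (h T))) \<partial>lborel_hist (Suc T))
     \<le> (\<integral>\<^sup>+h. ennreal (renyi_integrand a (f h) (g h)) \<partial>lborel_hist T) * E"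
proof -
  have [measurable]: "p h \<in> borel_measurable lborel_vec" "p' h \<in> borel_measurable lborel_vec"
    if "h \<in> space (lborel_hist T)" for h
    using that by (auto intro: measurable_history_section)
  have "(\<integral>\<^sup>+h. ennreal (renyi_integrand a (f (restrict h {..<T}) * p (restrict h {..<T}) (h T))
        (g (restrict h {..<T}) * p' (restrict h {..<T}) (h T))) \<partial>lborel_hist (Suc T))
      = (\<integral>\<^sup>+h. \<integral>\<^sup>+s. ennreal (renyi_integrand a (f h) (g h)) * ennreal (renyi_integrand a (p h s) (p' h s))
          \<partial>lborel_vec \<partial>lborel_hist T)"
    by (subst nn_integral_lborel_hist_Suc, measurable)
      (auto intro!: nn_integral_cong simp: restrict_lborel_hist renyi_integrand_mult
        renyi_integrand_nonneg ennreal_mult' f_nonneg g_pos p_nonneg p'_pos less_imp_le)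
  also have "\<dots> = (\<integral>\<^sup>+h. ennreal (renyi_integrand a (f h) (g h)) *
      (\<integral>\<^sup>+s. ennreal (renyi_integrand a (p h s) (p' h s)) \<partial>lborel_vec) \<partial>lborel_hist T)"
    by (intro nn_integral_cong nn_integral_cmult) (auto simp: sets_lborel_hist)
  also have "\<dots> \<le> (\<integral>\<^sup>+h. ennreal (renyi_integrand a (f h) (g h)) * E \<partial>lborel_hist T)"
    by (intro nn_integral_mono mult_left_mono step) auto
  also have "\<dots> = (\<integral>\<^sup>+h. ennreal (renyi_integrand a (f h) (g h)) \<partial>lborel_hist T) * E"
    by (intro nn_integral_multc) auto
  finally show ?thesis .
qed

context sma_dp_sgd
begin

definition hist_density :: "nat \<Rightarrow> 'x list \<Rightarrow> (nat \<Rightarrow> 'd \<Rightarrow> real) \<Rightarrow> real" where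
  "hist_density T D h = (\<Prod>t<T. step_density t D (restrict h {..<t}) (h t))"

lemma hist_density_Suc:
  "hist_density (Suc T) D h = hist_density T D (restrict h {..<T}) * step_density T D (restrict h {..<T}) (h T)"
  unfolding hist_density_def by (auto simp: prod.lessThan_Suc Int_absorb1 intro!: prod.cong)

lemma hist_density_pos: "0 < hist_density T D h"
  unfolding hist_density_def by (intro prod_pos step_density_pos)

lemma measurable_hist_density[measurable]: "hist_density T D \<in> borel_measurable (lborel_hist T)"
proof (induction T)
  case 0
  show ?case by (simp add: hist_density_def)
next
  case (Suc T)
  note Suc.IH[measurable]
  show ?case unfolding hist_density_Suc[abs_def] by measurable
qed

lemma measurable_sma_step_update:
  "(\<lambda>h. distr (sma_step grp C sig \<beta> q grad b T D h) (hspace (Suc T)) (\<lambda>s. h(T := s)))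
     \<in> hspace T \<rightarrow>\<^sub>M prob_algebra (hspace (Suc T))"
  by (intro measurable_distr_prob_space2[OF measurable_sma_step]) measurable

lemma sma_hist_in_prob_algebra: "sma_hist grp C sig \<beta> q grad b T D \<in> space (prob_algebra (hspace T))"
proof (induction T)
  case 0
  have "prob_space (return (hspace 0) (\<lambda>_::nat. undefined :: 'd \<Rightarrow> real))"
    by (rule prob_space_return) (simp add: hspace_def space_PiM)
  then show ?case by (simp add: space_prob_algebra)
next
  case (Suc T)
  then show ?case
    using measurable_sma_step_update[of T D]
    by (simp add: space_prob_algebra prob_space_bind' sets_bind')
qed

lemma sma_hist_eq_density:
  "sma_hist grp C sig \<beta> q grad b T D = density (lborel_hist T) (\<lambda>h. ennreal (hist_density T D h))"
proof (induction T)
  case 0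
  let ?u = "\<lambda>_::nat. undefined :: 'd \<Rightarrow> real"
  have "hspace 0 = count_space {?u}" "lborel_hist 0 = count_space {?u}"
    by (simp_all add: hspace_def lborel_hist_def PiM_empty)
  then show ?case
    unfolding sma_hist.simps
    by (auto simp: hist_density_def return_count_space_eq_density intro!: density_cong)
next
  case (Suc T)
  have "(\<lambda>h. distr (density lborel_vec (\<lambda>x. ennreal (step_density T D h x))) (hspace (Suc T)) (\<lambda>s. h(T := s)))
      \<in> hspace T \<rightarrow>\<^sub>M subprob_algebra (hspace (Suc T))"
    using measurable_sma_step_update[of T D] by (simp add: sma_step_eq_density measurable_prob_algebraD)
  then show ?case
    unfolding sma_hist.simps Suc.IH sma_step_eq_density hist_density_Suc
    by (intro density_bind_history_update) (auto simp: less_imp_le hist_density_pos step_density_pos)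
qed

lemma hist_renyi_moment_le:
  assumes "0 < \<beta>" and "\<And>t. q t \<in> {0..1}" and "valid_sgm_bound TYPE('d) eps_sgm"
    and "1 < a" and "adjacent D D'"
  shows "(\<integral>\<^sup>+h. ennreal (renyi_integrand a (hist_density T D h) (hist_density T D' h)) \<partial>lborel_hist T)
     \<le> ennreal (exp ((a - 1) * (\<Sum>t<T. eps_sgm a (q t) (sigma_eff \<beta> (sig t)))))"
proof (induction T)
  case 0
  show ?case
    by (simp add: hist_density_def renyi_integrand_def lborel_hist_def PiM_empty)
next
  case (Suc T)
  let ?e = "\<lambda>t. exp ((a - 1) * eps_sgm a (q t) (sigma_eff \<beta> (sig t)))"
  have "(\<integral>\<^sup>+h. ennreal (renyi_integrand a (hist_density (Suc T) D h) (hist_density (Suc T) D' h)) \<partial>lborel_hist (Suc T))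
      \<le> (\<integral>\<^sup>+h. ennreal (renyi_integrand a (hist_density T D h) (hist_density T D' h)) \<partial>lborel_hist T) * ennreal (?e T)"
    unfolding hist_density_Suc
    by (intro nn_integral_renyi_integrand_history_Suc_le step_renyi_moment_le assms)
      (auto simp: less_imp_le hist_density_pos step_density_pos)
  also have "\<dots> \<le> ennreal (exp ((a - 1) * (\<Sum>t<T. eps_sgm a (q t) (sigma_eff \<beta> (sig t))))) * ennreal (?e T)"
    using Suc.IH by (rule mult_right_mono) simp
  also have "\<dots> = ennreal (exp ((a - 1) * (\<Sum>t<Suc T. eps_sgm a (q t) (sigma_eff \<beta> (sig t)))))"
    by (simp add: ennreal_mult'[symmetric] exp_add[symmetric] distrib_left)
  finally show ?case .
qed

lemma sma_hist_rdp:
  assumes "0 < \<beta>" and "\<And>t. q t \<in> {0..1}" and "valid_sgm_bound TYPE('d) eps_sgm" and "1 < a"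
  shows "rdp a (\<Sum>t<T. eps_sgm a (q t) (sigma_eff \<beta> (sig t))) (sma_hist grp C sig \<beta> q grad b T)"
  unfolding rdp_def sma_hist_eq_density
proof (intro allI impI)
  fix D D' :: "'x list" assume "adjacent D D'"
  moreover have "prob_space (density (lborel_hist T) (\<lambda>h. ennreal (hist_density T D' h)))"
    using sma_hist_in_prob_algebra[of T D'] by (simp add: space_prob_algebra sma_hist_eq_density)
  ultimately show "renyi_div a (density (lborel_hist T) (hist_density T D)) (density (lborel_hist T) (hist_density T D'))
      \<le> ereal (\<Sum>t<T. eps_sgm a (q t) (sigma_eff \<beta> (sig t)))"
    using assms by (intro renyi_div_density_le hist_renyi_moment_le hist_density_pos) auto
qed

end

theorem theoremB3:
  fixes grp :: "'d::finite \<Rightarrow> 'g::finite"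
    and C :: "'g \<Rightarrow> real" and sig :: "nat \<Rightarrow> 'g \<Rightarrow> real"
    and \<beta> :: real and q :: "nat \<Rightarrow> real" and T :: nat
    and grad :: "nat \<Rightarrow> (nat \<Rightarrow> 'd \<Rightarrow> real) \<Rightarrow> 'x \<Rightarrow> ('d \<Rightarrow> real)"
    and b :: "nat \<Rightarrow> (nat \<Rightarrow> 'd \<Rightarrow> real) \<Rightarrow> ('d \<Rightarrow> real)"
    and eps_sgm :: "real \<Rightarrow> real \<Rightarrow> real \<Rightarrow> real"
  assumes C_pos: "\<And>g. C g > 0"
    and sig_pos: "\<And>t g. sig t g > 0"
    and beta: "0 < \<beta>" "\<beta> \<le> 1"
    and q_prob: "\<And>t. q t \<in> {0..1}"
    and grad_meas: "\<And>t x. (\<lambda>h. grad t h x) \<in> hspace t \<rightarrow>\<^sub>M vspace"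
    and b_meas: "\<And>t. b t \<in> hspace t \<rightarrow>\<^sub>M vspace"
    and valid: "valid_sgm_bound TYPE('d) eps_sgm"
  shows "\<forall>a>1. rdp a (\<Sum>t<T. eps_sgm a (q t) (sigma_eff \<beta> (sig t)))
                 (sma_hist grp C sig \<beta> q grad b T)
       \<and> (\<forall>\<delta>. 0 < \<delta> \<and> \<delta> < 1 \<longrightarrow>
           dp (INF a\<in>{1<..}. (\<Sum>t<T. eps_sgm a (q t) (sigma_eff \<beta> (sig t))) + ln (1 / \<delta>) / (a - 1))
              \<delta> (sma_hist grp C sig \<beta> q grad b T))"
proof -
  interpret sma_dp_sgd grp C sig \<beta> q grad b
    using C_pos sig_pos grad_meas b_meas by unfold_locales
  have rdp: "rdp a (\<Sum>t<T. eps_sgm a (q t) (sigma_eff \<beta> (sig t))) (sma_hist grp C sig \<beta> q grad b T)"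
    if "1 < a" for a
    using beta(1) q_prob valid that by (rule sma_hist_rdp)
  have prob: "prob_space (sma_hist grp C sig \<beta> q grad b T D)" for D
    using sma_hist_in_prob_algebra by (simp add: space_prob_algebra)
  show ?thesis
    using rdp dp_INF_of_rdp[OF prob rdp] by auto
qed

end
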